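(* Let $r:\mathbb{R}^\ell\to\mathbb{R}^m$ be differentiable with Jacobian $J_r$, let $\mu>0$ be differentiable near $x$ with $\eta=\log\mu$, and suppose $J_r(x)$ has full column rank. Let $p=-J_r^+r$ (all quantities at $x$), $\beta=1-\langle p,\nabla\eta\rangle$, $P=I-J_rJ_r^+$, $\omega=\|Pr\|_2^2\|(J_r^+)^T\nabla\eta\|_2^2+\beta^2$, and assume $\omega\ne0$. Then the Gauss--Newton step for the deflated residual $\mu r$, namely $\hat p=-J_{\mu r}(x)^+\mu(x)r(x)$ with $J_{\mu r}=\mu J_r+r\nabla\mu^T$, satisfies $$\hat p=\beta_1p+\beta_2(J_r^TJ_r)^{-1}\nabla\eta,\qquad \beta_1=\frac{\beta}{\omega},\quad \beta_2=-\frac{\|Pr\|_2^2}{\omega}.$$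
   Context: $A^+$ denotes the Moore--Penrose pseudoinverse; for full column rank $J_r$, $J_r^+=(J_r^TJ_r)^{-1}J_r^T$. $\nabla\eta=\mu^{-1}\nabla\mu$. *)

theory Defs
  imports "HOL-Analysis.Analysis"
begin

definition pinv :: "real^'n^'m \<Rightarrow> real^'m^'n" where
  "pinv A = (THE B. A ** B ** A = A \<and> B ** A ** B = B \<and>
                    transpose (A ** B) = A ** B \<and> transpose (B ** A) = B ** A)"

definition outer :: "real^'m \<Rightarrow> real^'n \<Rightarrow> real^'n^'m" where
  "outer u v = (\<chi> i j. u $ i * v $ j)"

end

theory Submission imports Defs begin

text \<open>For full column rank \<open>J\<close>, the least-squares solution of \<open>(\<mu>J + r\<nabla>\<mu>\<^sup>T) v = \<mu>r\<close> is
characterised by the normal equations. Decompose \<open>r = -Jp + q\<close> with \<open>q = Pr \<perp> range J\<close> and put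
\<open>t = (J\<^sup>+)\<^sup>T\<nabla>\<eta>\<close>, so that \<open>J\<^sup>Tq = 0\<close>, \<open>J\<^sup>Tt = \<nabla>\<eta>\<close>, \<open>r\<^sup>Tq = \<parallel>q\<parallel>\<^sup>2\<close> and \<open>r\<^sup>Tt = \<beta> - 1\<close>.
For the claimed step \<open>y\<close> the residual works out to a multiple of \<open>\<beta>q - \<parallel>q\<parallel>\<^sup>2t\<close>, which the
transposed Jacobian maps to \<open>(\<beta>\<parallel>q\<parallel>\<^sup>2 - \<parallel>q\<parallel>\<^sup>2\<beta>)\<nabla>\<mu> = 0\<close>. The condition \<open>\<omega> \<noteq> 0\<close> is exactly what
rules out \<open>r = Jw\<close> with \<open>1 + \<langle>w,\<nabla>\<eta>\<rangle> = 0\<close>, the only way the rank-one update can lose rank.\<close>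

lemma inner_matrix_vector_mult: "(A *v x) \<bullet> y = x \<bullet> (transpose A *v y)" for A :: "real^'n^'m"
  by (metis dot_lmul_matrix inner_commute transpose_matrix_vector)

lemma outer_mult_vector: "outer u w *v v = (w \<bullet> v) *\<^sub>R u"
  by (simp add: vec_eq_iff outer_def matrix_vector_mult_def inner_vec_def sum_distrib_left mult_ac)

lemma transpose_outer: "transpose (outer u w) = outer w u"
  by (simp add: transpose_def outer_def vec_eq_iff mult.commute)

lemma transpose_scaleR_add:
  "transpose (c *\<^sub>R A + B) = c *\<^sub>R transpose A + transpose (B::real^'n^'m)"
  by (simp add: transpose_def vec_eq_iff)

lemma matrix_vector_mult_minus: "A *v (- x) = - (A *v (x::real^'n))"
  by (simp add: vec_eq_iff matrix_vector_mult_def sum_negf)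

lemma inj_matrix_vector_mult_iff: "inj ((*v) (A::real^'n^'m)) \<longleftrightarrow> (\<forall>x. A *v x = 0 \<longrightarrow> x = 0)"
  using matrix_left_invertible_ker matrix_left_invertible_injective by blast

lemma matrix_inv_mult:
  assumes "invertible (G::real^'n^'n)"
  shows matrix_mul_matrix_inv: "G ** matrix_inv G = mat 1"
    and matrix_inv_mul: "matrix_inv G ** G = mat 1"
  using someI_ex[OF assms[unfolded invertible_def]] by (auto simp: matrix_inv_def)

lemma transpose_matrix_inv_symmetric:
  assumes "invertible (G::real^'n^'n)" "transpose G = G"
  shows "transpose (matrix_inv G) = matrix_inv G"
proof -
  have "transpose (matrix_inv G) ** G = mat 1"
    by (metis assms matrix_transpose_mul matrix_mul_matrix_inv transpose_mat)
  then show ?thesis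
    by (metis assms(1) matrix_mul_assoc matrix_mul_lid matrix_mul_rid matrix_mul_matrix_inv)
qed

lemma invertible_gram:
  fixes A :: "real^'n^'m"
  assumes "inj ((*v) A)"
  shows "invertible (transpose A ** A)"
proof -
  have "z = 0" if "(transpose A ** A) *v z = 0" for z
  proof -
    have "(A *v z) \<bullet> (A *v z) = z \<bullet> ((transpose A ** A) *v z)"
      by (simp add: inner_matrix_vector_mult matrix_vector_mul_assoc del: transpose_matrix_vector)
    with that have "A *v z = 0" by simp
    with assms show "z = 0" by (simp add: inj_matrix_vector_mult_iff)
  qed
  then show ?thesis
    using matrix_left_invertible_ker invertible_left_inverse by blast
qed

lemma pinv_eq_gram_inverse:
  fixes A :: "real^'n^'m"
  assumes "inj ((*v) A)"
  shows "pinv A = matrix_inv (transpose A ** A) ** transpose A"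
proof -
  let ?G = "transpose A ** A"
  let ?M = "matrix_inv ?G"
  let ?B = "?M ** transpose A"
  have iG: "invertible ?G" using invertible_gram[OF assms] .
  have MG: "?M ** ?G = mat 1" using matrix_inv_mul[OF iG] .
  have sM: "transpose ?M = ?M"
    by (rule transpose_matrix_inv_symmetric[OF iG]) (simp add: matrix_transpose_mul)
  show ?thesis unfolding pinv_def
  proof (rule the_equality)
    show "A ** ?B ** A = A \<and> ?B ** A ** ?B = ?B \<and>
      transpose (A ** ?B) = A ** ?B \<and> transpose (?B ** A) = ?B ** A"
    proof (intro conjI)
      show "A ** ?B ** A = A" using MG by (metis matrix_mul_assoc matrix_mul_rid)
      show "?B ** A ** ?B = ?B" using MG by (metis matrix_mul_assoc matrix_mul_lid)
      show "transpose (A ** ?B) = A ** ?B" using sM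
        by (simp add: matrix_transpose_mul matrix_mul_assoc)
      show "transpose (?B ** A) = ?B ** A" using MG
        by (metis matrix_mul_assoc transpose_mat)
    qed
  next
    fix B assume B: "A ** B ** A = A \<and> B ** A ** B = B \<and>
      transpose (A ** B) = A ** B \<and> transpose (B ** A) = B ** A"
    have "?G ** B = transpose A ** transpose (A ** B)"
      using B by (simp add: matrix_mul_assoc)
    also have "\<dots> = transpose (A ** B ** A)"
      by (simp add: matrix_transpose_mul matrix_mul_assoc)
    finally have "?G ** B = transpose A" using B by simp
    then show "B = ?B" using MG by (metis matrix_mul_assoc matrix_mul_lid)
  qed
qed

lemma pinv_mult_eqI:
  fixes A :: "real^'n^'m"
  assumes "inj ((*v) A)" and "transpose A *v (A *v y) = transpose A *v b"
  shows "pinv A *v b = y"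
proof -
  let ?G = "transpose A ** A"
  have "pinv A *v b = matrix_inv ?G *v (?G *v y)"
    using assms by (simp add: pinv_eq_gram_inverse matrix_vector_mul_assoc del: transpose_matrix_vector)
  also have "\<dots> = y"
    by (simp add: matrix_vector_mul_assoc matrix_inv_mul[OF invertible_gram[OF assms(1)]])
  finally show ?thesis .
qed

lemma pinv_mult_left_inverse: "inj ((*v) A) \<Longrightarrow> pinv A *v (A *v w) = w" for A :: "real^'n^'m"
  by (rule pinv_mult_eqI) simp_all

lemma transpose_mult_pinv_residual:
  fixes A :: "real^'n^'m"
  assumes "inj ((*v) A)"
  shows "transpose A *v ((mat 1 - A ** pinv A) *v b) = 0"
proof -
  let ?G = "transpose A ** A"
  have "transpose A *v (A *v (pinv A *v b)) = (?G ** matrix_inv ?G) *v (transpose A *v b)"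
    using assms by (simp add: pinv_eq_gram_inverse matrix_vector_mul_assoc matrix_mul_assoc
        del: transpose_matrix_vector)
  then show ?thesis
    by (simp add: matrix_mul_matrix_inv[OF invertible_gram[OF assms]] matrix_vector_mult_diff_rdistrib
        matrix_vector_mult_diff_distrib matrix_vector_mul_assoc del: transpose_matrix_vector)
qed

lemma transpose_pinv_mult:
  fixes A :: "real^'n^'m"
  assumes "inj ((*v) A)"
  shows "transpose (pinv A) *v h = A *v (matrix_inv (transpose A ** A) *v h)"
proof -
  have "transpose (matrix_inv (transpose A ** A)) = matrix_inv (transpose A ** A)"
    by (rule transpose_matrix_inv_symmetric[OF invertible_gram[OF assms]])
      (simp add: matrix_transpose_mul)
  then show ?thesis
    using assms by (simp add: pinv_eq_gram_inverse matrix_transpose_mul matrix_vector_mul_assoc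
        del: transpose_matrix_vector)
qed

lemma transpose_mult_transpose_pinv:
  fixes A :: "real^'n^'m"
  assumes "inj ((*v) A)"
  shows "transpose A *v (transpose (pinv A) *v h) = h"
proof -
  have "transpose A *v (transpose (pinv A) *v h)
      = (transpose A ** A ** matrix_inv (transpose A ** A)) *v h"
    using assms by (simp add: transpose_pinv_mult matrix_vector_mul_assoc matrix_mul_assoc
        del: transpose_matrix_vector)
  then show ?thesis by (simp add: matrix_mul_matrix_inv[OF invertible_gram[OF assms]])
qed

text \<open>A kernel vector \<open>v\<close> must have \<open>\<langle>g,v\<rangle> \<noteq> 0\<close>, and then \<open>w = -(m/\<langle>g,v\<rangle>) v\<close> solves \<open>Jw = b\<close>.\<close>

lemma inj_rank_one_update:
  fixes J :: "real^'n^'m"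
  assumes inj: "inj ((*v) J)" and "m \<noteq> 0"
    and no_root: "\<And>w. J *v w = b \<Longrightarrow> m + g \<bullet> w \<noteq> 0"
  shows "inj ((*v) (m *\<^sub>R J + outer b g))"
  unfolding inj_matrix_vector_mult_iff
proof (intro allI impI)
  fix v assume "(m *\<^sub>R J + outer b g) *v v = 0"
  then have kernel: "m *\<^sub>R (J *v v) + (g \<bullet> v) *\<^sub>R b = 0"
    by (simp add: matrix_vector_mult_add_rdistrib scaleR_matrix_vector_assoc outer_mult_vector)
  show "v = 0"
  proof (cases "g \<bullet> v = 0")
    case True
    with kernel \<open>m \<noteq> 0\<close> have "J *v v = 0" by simp
    with inj show ?thesis by (simp add: inj_matrix_vector_mult_iff)
  next
    case False
    define w where "w = (- (m / (g \<bullet> v))) *\<^sub>R v"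
    have "J *v w = (- (1 / (g \<bullet> v))) *\<^sub>R (m *\<^sub>R (J *v v))"
      by (simp add: w_def matrix_vector_mult_minus matrix_vector_mult_scaleR)
    also have "\<dots> = b"
      using kernel False by (simp add: eq_neg_iff_add_eq_0[symmetric])
    finally have "J *v w = b" .
    moreover have "m + g \<bullet> w = 0" using False by (simp add: w_def)
    ultimately show ?thesis using no_root by blast
  qed
qed

lemma pinv_rank_one_update_mult:
  fixes J :: "real^'n^'k" and b :: "real^'k" and h :: "real^'n"
  assumes inj: "inj ((*v) J)" and "m \<noteq> 0"
    and p_def: "p = - (pinv J *v b)"
    and q_def: "q = (mat 1 - J ** pinv J) *v b"
    and t_def: "t = transpose (pinv J) *v h"
    and \<beta>_def: "\<beta> = 1 - p \<bullet> h"
    and \<omega>_def: "\<omega> = (norm q)\<^sup>2 * (norm t)\<^sup>2 + \<beta>\<^sup>2"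
    and "\<omega> \<noteq> 0"
  shows "- (pinv (m *\<^sub>R J + outer b (m *\<^sub>R h)) *v (m *\<^sub>R b))
    = (\<beta> / \<omega>) *\<^sub>R p + (- (norm q)\<^sup>2 / \<omega>) *\<^sub>R (matrix_inv (transpose J ** J) *v h)"
proof -
  define K where "K = m *\<^sub>R J + outer b (m *\<^sub>R h)"
  define M where "M = matrix_inv (transpose J ** J)"
  define c where "c = (norm q)\<^sup>2"
  define y where "y = (\<beta> / \<omega>) *\<^sub>R p + (- c / \<omega>) *\<^sub>R (M *v h)"
  have b_split: "b = q - J *v p"
    by (simp add: q_def p_def matrix_vector_mult_diff_rdistrib matrix_vector_mul_assoc
        matrix_vector_mult_minus)
  have JTq: "transpose J *v q = 0"
    unfolding q_def by (rule transpose_mult_pinv_residual[OF inj])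
  have JTt: "transpose J *v t = h"
    unfolding t_def by (rule transpose_mult_transpose_pinv[OF inj])
  have t_eq: "t = J *v (M *v h)"
    unfolding t_def M_def by (rule transpose_pinv_mult[OF inj])
  have bq: "b \<bullet> q = c"
    by (simp add: b_split inner_diff_left inner_matrix_vector_mult JTq c_def power2_norm_eq_inner
        del: transpose_matrix_vector)
  have bt: "b \<bullet> t = \<beta> - 1"
    using inner_matrix_vector_mult[of "pinv J" b h]
    by (simp add: t_def \<beta>_def p_def inner_commute del: transpose_matrix_vector)
  have hMh: "h \<bullet> (M *v h) = (norm t)\<^sup>2"
    using inner_matrix_vector_mult[of J "M *v h" t]
    by (simp add: power2_norm_eq_inner t_eq[symmetric] JTt inner_commute del: transpose_matrix_vector)
  have Kv: "K *v v = m *\<^sub>R (J *v v) + (m * (h \<bullet> v)) *\<^sub>R b" for v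
    by (simp add: K_def matrix_vector_mult_add_rdistrib scaleR_matrix_vector_assoc outer_mult_vector)
  have KTv: "transpose K *v v = m *\<^sub>R (transpose J *v v + (b \<bullet> v) *\<^sub>R h)" for v
    by (simp add: K_def transpose_scaleR_add transpose_outer matrix_vector_mult_add_rdistrib
        scaleR_matrix_vector_assoc outer_mult_vector scaleR_add_right del: transpose_matrix_vector)
  have coeff: "(\<beta> / \<omega>) * (1 - \<beta>) - (c / \<omega>) * (norm t)\<^sup>2 + 1 = \<beta> / \<omega>"
  proof -
    have "\<beta> * (1 - \<beta>) - c * (norm t)\<^sup>2 + \<omega> = \<beta>"
      by (simp add: \<omega>_def c_def power2_eq_square algebra_simps)
    moreover have "(\<beta> / \<omega>) * (1 - \<beta>) - (c / \<omega>) * (norm t)\<^sup>2 + 1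
        = (\<beta> * (1 - \<beta>) - c * (norm t)\<^sup>2 + \<omega>) / \<omega>"
      using \<open>\<omega> \<noteq> 0\<close> by (simp add: field_simps)
    ultimately show ?thesis by simp
  qed
  have hy: "h \<bullet> y = (\<beta> / \<omega>) * (1 - \<beta>) - (c / \<omega>) * (norm t)\<^sup>2"
  proof -
    have "h \<bullet> p = 1 - \<beta>" by (simp add: \<beta>_def inner_commute)
    then show ?thesis by (simp add: y_def inner_diff_right hMh)
  qed
  have Jy: "J *v y = (\<beta> / \<omega>) *\<^sub>R (J *v p) - (c / \<omega>) *\<^sub>R t"
    by (simp add: y_def t_eq matrix_vector_mult_diff_distrib matrix_vector_mult_scaleR)
  have "K *v y + m *\<^sub>R b = m *\<^sub>R (J *v y) + (m * (h \<bullet> y)) *\<^sub>R b + m *\<^sub>R b"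
    by (simp add: Kv)
  also have "\<dots> = m *\<^sub>R ((\<beta> / \<omega>) *\<^sub>R (J *v p) - (c / \<omega>) *\<^sub>R t
      + ((\<beta> / \<omega>) * (1 - \<beta>) - (c / \<omega>) * (norm t)\<^sup>2 + 1) *\<^sub>R b)"
    by (simp only: Jy hy) (simp add: algebra_simps)
  also have "\<dots> = m *\<^sub>R ((\<beta> / \<omega>) *\<^sub>R (b + J *v p) - (c / \<omega>) *\<^sub>R t)"
    by (simp only: coeff) (simp add: algebra_simps)
  also have "\<dots> = (m / \<omega>) *\<^sub>R (\<beta> *\<^sub>R q - c *\<^sub>R t)"
    by (simp add: b_split algebra_simps)
  finally have residual: "K *v y + m *\<^sub>R b = (m / \<omega>) *\<^sub>R (\<beta> *\<^sub>R q - c *\<^sub>R t)" .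
  have "transpose K *v (K *v y + m *\<^sub>R b) = 0"
    by (simp add: residual matrix_vector_mult_scaleR matrix_vector_mult_diff_distrib KTv JTq JTt bq bt
        algebra_simps del: transpose_matrix_vector)
  then have normal_eq: "transpose K *v (K *v (- y)) = transpose K *v (m *\<^sub>R b)"
    by (simp add: matrix_vector_mult_minus matrix_vector_right_distrib neg_eq_iff_add_eq_0
        del: transpose_matrix_vector)
  have "inj ((*v) K)"
    unfolding K_def
  proof (rule inj_rank_one_update[OF inj \<open>m \<noteq> 0\<close>])
    fix w assume Jw: "J *v w = b"
    then have "pinv J *v b = w" using pinv_mult_left_inverse[OF inj] by blast
    then have "q = 0" and "\<beta> = 1 + h \<bullet> w"
      by (simp_all add: q_def \<beta>_def p_def Jw matrix_vector_mult_diff_rdistrib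
          matrix_vector_mul_assoc[symmetric] inner_commute)
    with \<open>\<omega> \<noteq> 0\<close> have "1 + h \<bullet> w \<noteq> 0" by (simp add: \<omega>_def)
    moreover have "m + (m *\<^sub>R h) \<bullet> w = m * (1 + h \<bullet> w)" by (simp add: algebra_simps)
    ultimately show "m + (m *\<^sub>R h) \<bullet> w \<noteq> 0" using \<open>m \<noteq> 0\<close> by simp
  qed
  from pinv_mult_eqI[OF this normal_eq] show ?thesis
    by (simp add: K_def y_def M_def c_def)
qed

theorem mainTheorem3:
  fixes r :: "real^'l \<Rightarrow> real^'m" and \<mu> :: "real^'l \<Rightarrow> real"
    and x :: "real^'l" and Jr :: "real^'l^'m" and g\<mu> :: "real^'l" and U :: "(real^'l) set"
  assumes r_diff: "\<And>y. r differentiable (at y)"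
    and r_deriv: "(r has_derivative (\<lambda>h. Jr *v h)) (at x)"
    and mu_pos: "\<And>y. \<mu> y > 0"
    and U: "open U" "x \<in> U" and mu_diff: "\<mu> differentiable_on U"
    and mu_deriv: "(\<mu> has_derivative (\<lambda>h. g\<mu> \<bullet> h)) (at x)"
    and full_rank: "rank Jr = CARD('l)"
    and omega_nz: "(let p = - (pinv Jr *v r x);
                        g\<eta> = (1 / \<mu> x) *\<^sub>R g\<mu>;
                        \<beta> = 1 - p \<bullet> g\<eta>;
                        P = mat 1 - Jr ** pinv Jr
                    in (norm (P *v r x))\<^sup>2 * (norm (transpose (pinv Jr) *v g\<eta>))\<^sup>2 + \<beta>\<^sup>2) \<noteq> 0"
  shows "(let p = - (pinv Jr *v r x);
              g\<eta> = (1 / \<mu> x) *\<^sub>R g\<mu>;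
              \<beta> = 1 - p \<bullet> g\<eta>;
              P = mat 1 - Jr ** pinv Jr;
              \<omega> = (norm (P *v r x))\<^sup>2 * (norm (transpose (pinv Jr) *v g\<eta>))\<^sup>2 + \<beta>\<^sup>2;
              J\<mu>r = \<mu> x *\<^sub>R Jr + outer (r x) g\<mu>;
              p_hat = - (pinv J\<mu>r *v (\<mu> x *\<^sub>R r x))
          in p_hat = (\<beta> / \<omega>) *\<^sub>R p
                     + (- (norm (P *v r x))\<^sup>2 / \<omega>) *\<^sub>R (matrix_inv (transpose Jr ** Jr) *v g\<eta>))"
proof -
  have inj: "inj ((*v) Jr)" using full_rank full_rank_injective by blast
  have "\<mu> x \<noteq> 0" using mu_pos[of x] by simp
  define g\<eta> where "g\<eta> = (1 / \<mu> x) *\<^sub>R g\<mu>"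
  have g\<mu>: "g\<mu> = \<mu> x *\<^sub>R g\<eta>" using \<open>\<mu> x \<noteq> 0\<close> by (simp add: g\<eta>_def)
  \<comment> \<open>Only the derivatives at \<open>x\<close> enter: the identity is pure linear algebra.\<close>
  show ?thesis
    using omega_nz unfolding Let_def g\<eta>_def[symmetric]
    by (subst g\<mu>) (rule pinv_rank_one_update_mult[OF inj \<open>\<mu> x \<noteq> 0\<close> refl refl refl refl refl])
qed

end
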